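(* Let $\mathcal I,\mathcal J$ be ideals on $\omega$. Then (1) $\mathfrak b_\sigma(\mathcal I,\mathcal J)=\min\{\mathfrak b_s(\mathcal I\cap\mathcal J,\mathcal J,\mathcal I),\mathrm{add}_\omega(\mathcal I,\mathcal J)\}$; (2) $\mathfrak b_\sigma(\mathcal I)=\min\{\mathfrak b_s(\mathcal I),\mathrm{add}_\omega(\mathcal I)\}$.
   Context: An ideal on $\omega$ is a family $\mathcal I\subseteq\mathcal P(\omega)$ closed under finite unions and subsets, containing all finite sets, with $\omega\notin\mathcal I$. Convention: $\min\emptyset=\infty$ and $\kappa<\infty$ for every cardinal $\kappa$. $\widehat{\mathcal P}_{\mathcal I}$ = sequences $(A_n)\in\mathcal I^\omega$ of pairwise disjoint sets; $\mathcal P_{\mathcal I}$ = those with $\bigcup_nA_n=\omega$; $\mathcal M_{\mathcal I}$ = sequences $(E_k)\in\mathcal I^\omega$ with $E_k\subseteq E_{k+1}$ for all $k$. $\mathfrak b_s(\mathcal I,\mathcal J,\mathcal K)=\min\{|\mathcal E|:\mathcal E\subseteq\widehat{\mathcal P}_{\mathcal K}$ and for every $(A_n)\in\mathcal P_{\mathcal J}$ there is $(E_n)\in\mathcal E$ with $\bigcup_n(A_{n+1}\cap\bigcup_{i\le n}E_i)\notin\mathcal I\}$; $\mathfrak b_\sigma(\mathcal I,\mathcal J)=\min\{|\mathcal E|:\mathcal E\subseteq\mathcal M_{\mathcal I}$ and for every $(A_n)\in\mathcal M_{\mathcal J}$ there is $(E_n)\in\mathcal E$ with $E_n\not\subseteq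 A_n$ for infinitely many $n\}$; $\mathrm{add}_\omega(\mathcal I,\mathcal J)=\min\{|\mathcal A|:\mathcal A\subseteq\mathcal I$ and for every $(B_n)\in\mathcal J^\omega$ there is $A\in\mathcal A$ with $A\not\subseteq B_n$ for all $n\}$. $\mathfrak b_s(\mathcal I)=\mathfrak b_s(\mathcal I,\mathcal I,\mathcal I)$, $\mathfrak b_\sigma(\mathcal I)=\mathfrak b_\sigma(\mathcal I,\mathcal I)$, $\mathrm{add}_\omega(\mathcal I)=\mathrm{add}_\omega(\mathcal I,\mathcal I)$. *)

theory Defs
  imports Main
begin

definition is_ideal :: "nat set set \<Rightarrow> bool" where
  "is_ideal I \<longleftrightarrow>
     (\<forall>A\<in>I. \<forall>B\<in>I. A \<union> B \<in> I) \<and>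
     (\<forall>A\<in>I. \<forall>B. B \<subseteq> A \<longrightarrow> B \<in> I) \<and>
     (\<forall>F. finite F \<longrightarrow> F \<in> I) \<and>
     UNIV \<notin> I"

definition Phat :: "nat set set \<Rightarrow> (nat \<Rightarrow> nat set) set" where
  "Phat K = {A. (\<forall>n. A n \<in> K) \<and> (\<forall>m n. m \<noteq> n \<longrightarrow> A m \<inter> A n = {})}"

definition Part :: "nat set set \<Rightarrow> (nat \<Rightarrow> nat set) set" where
  "Part K = {A. A \<in> Phat K \<and> (\<Union>n. A n) = UNIV}"

definition Mon :: "nat set set \<Rightarrow> (nat \<Rightarrow> nat set) set" where
  "Mon I = {E. (\<forall>k. E k \<in> I) \<and> (\<forall>k. E k \<subseteq> E (Suc k))}"

text \<open>Each invariant is the minimum cardinality of a family in the corresponding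
  set of witness families (with min of the empty set = infinity).\<close>

definition bs_fams :: "nat set set \<Rightarrow> nat set set \<Rightarrow> nat set set \<Rightarrow> (nat \<Rightarrow> nat set) set set" where
  "bs_fams I J K = {\<E>. \<E> \<subseteq> Phat K \<and>
     (\<forall>A\<in>Part J. \<exists>E\<in>\<E>. (\<Union>n. A (Suc n) \<inter> (\<Union>i\<le>n. E i)) \<notin> I)}"

definition bsigma_fams :: "nat set set \<Rightarrow> nat set set \<Rightarrow> (nat \<Rightarrow> nat set) set set" where
  "bsigma_fams I J = {\<E>. \<E> \<subseteq> Mon I \<and>
     (\<forall>A\<in>Mon J. \<exists>E\<in>\<E>. infinite {n. \<not> E n \<subseteq> A n})}"

definition addw_fams :: "nat set set \<Rightarrow> nat set set \<Rightarrow> nat set set set" where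
  "addw_fams I J = {\<A>. \<A> \<subseteq> I \<and>
     (\<forall>B::nat \<Rightarrow> nat set. (\<forall>n. B n \<in> J) \<longrightarrow> (\<exists>A\<in>\<A>. \<forall>n. \<not> A \<subseteq> B n))}"

text \<open>mincard X denotes min of the cardinalities of members of X (infinity if X = {}).
  Since cardinals are well-ordered, min|X| <= min|Y| iff every y in Y has some x in X with |x| <= |y|.\<close>

definition mincard_le :: "'a set set \<Rightarrow> 'b set set \<Rightarrow> bool" where
  "mincard_le X Y \<longleftrightarrow> (\<forall>y\<in>Y. \<exists>x\<in>X. (card_of x, card_of y) \<in> ordLeq)"

text \<open>min|X| = min(min|Y|, min|Z|)\<close>
definition mincard_eq_min :: "'a set set \<Rightarrow> 'b set set \<Rightarrow> 'c set set \<Rightarrow> bool" where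
  "mincard_eq_min X Y Z \<longleftrightarrow>
     mincard_le X Y \<and> mincard_le X Z \<and>
     (\<forall>x\<in>X. (\<exists>y\<in>Y. (card_of y, card_of x) \<in> ordLeq) \<or> (\<exists>z\<in>Z. (card_of z, card_of x) \<in> ordLeq))"

end

theory Submission
  imports Defs "HOL-Library.Disjoint_Sets"
begin

text \<open>Partial unions turn a disjoint sequence into an increasing one, and successive
  differences (\<open>disjointed\<close>) turn an increasing sequence back into a disjoint one.
  Via partial unions, a family witnessing \<open>\<bb>\<^sub>s(\<I> \<inter> \<J>, \<J>, \<I>)\<close> also witnesses
  \<open>\<bb>\<^sub>\<sigma>(\<I>, \<J>)\<close>: an increasing sequence \<open>B\<close> in \<open>\<J>\<close>, enlarged by \<open>{0..n}\<close> at stage \<open>n\<close>,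
  is disjointed into a partition of \<open>\<omega>\<close>, against which some member of the family must be
  large. A family witnessing \<open>add\<^sub>\<omega>(\<I>, \<J>)\<close> witnesses \<open>\<bb>\<^sub>\<sigma>(\<I>, \<J>)\<close> as constant sequences.
  Conversely, if the differences of a \<open>\<bb>\<^sub>\<sigma>\<close>-family \<open>X\<close> fail for \<open>\<bb>\<^sub>s\<close>, there is a
  partition \<open>A\<close> of \<open>\<omega>\<close> into sets of \<open>\<J>\<close> such that every tail \<open>\<Union>\<^sub>n A\<^sub>n\<^sub>+\<^sub>1 \<inter> E\<^sub>n\<close> with
  \<open>E \<in> X\<close> lies in \<open>\<I>\<close>. These tails witness \<open>add\<^sub>\<omega>(\<I>, \<J>)\<close>: if sets \<open>C\<^sub>m \<in> \<J>\<close> swallowed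
  them all, then \<open>\<Union>\<^sub>i\<^sub>\<le>\<^sub>n (A\<^sub>i \<union> C\<^sub>i)\<close> would be an increasing sequence in \<open>\<J>\<close> eventually
  containing every \<open>E\<^sub>n\<close>.\<close>

lemma is_ideal_Un: "is_ideal I \<Longrightarrow> A \<in> I \<Longrightarrow> B \<in> I \<Longrightarrow> A \<union> B \<in> I"
  unfolding is_ideal_def by blast

lemma is_ideal_subset: "is_ideal I \<Longrightarrow> A \<in> I \<Longrightarrow> B \<subseteq> A \<Longrightarrow> B \<in> I"
  unfolding is_ideal_def by blast

lemma is_ideal_finite: "is_ideal I \<Longrightarrow> finite F \<Longrightarrow> F \<in> I"
  unfolding is_ideal_def by blast

lemma is_ideal_finite_UN:
  assumes "is_ideal I" "finite K" "\<And>i. i \<in> K \<Longrightarrow> A i \<in> I"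
  shows "(\<Union>i\<in>K. A i) \<in> I"
  using assms(2,3)
proof (induction K rule: finite_induct)
  case empty
  show ?case using is_ideal_finite[OF assms(1)] by simp
next
  case (insert k K)
  then show ?case using is_ideal_Un[OF assms(1)] by simp
qed

lemma mincard_eq_min_by_images:
  assumes "\<And>y. y \<in> Y \<Longrightarrow> \<exists>f. f ` y \<in> X"
    and "\<And>z. z \<in> Z \<Longrightarrow> \<exists>f. f ` z \<in> X"
    and "\<And>x. x \<in> X \<Longrightarrow> (\<exists>f. f ` x \<in> Y) \<or> (\<exists>f. f ` x \<in> Z)"
  shows "mincard_eq_min X Y Z"
  unfolding mincard_eq_min_def mincard_le_def
  using assms card_of_image by metis

definition partial_Un :: "(nat \<Rightarrow> 'a set) \<Rightarrow> nat \<Rightarrow> 'a set" where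
  "partial_Un E n = (\<Union>i\<le>n. E i)"

definition tail_meet :: "(nat \<Rightarrow> 'a set) \<Rightarrow> (nat \<Rightarrow> 'a set) \<Rightarrow> 'a set" where
  "tail_meet A E = (\<Union>n. A (Suc n) \<inter> E n)"

lemma bs_fams_iff:
  "\<E> \<in> bs_fams I J K \<longleftrightarrow>
     \<E> \<subseteq> Phat K \<and> (\<forall>A\<in>Part J. \<exists>E\<in>\<E>. tail_meet A (partial_Un E) \<notin> I)"
  by (simp add: bs_fams_def tail_meet_def partial_Un_def)

lemma Mon_iff: "E \<in> Mon I \<longleftrightarrow> (\<forall>k. E k \<in> I) \<and> mono E"
  by (simp add: Mon_def mono_iff_le_Suc)

lemma mono_partial_Un: "mono (partial_Un E)"
  by (intro monoI) (force simp: partial_Un_def)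

lemma partial_Un_disjointed: "mono E \<Longrightarrow> partial_Un (disjointed E) = E"
proof
  fix n
  assume "mono E"
  have "partial_Un (disjointed E) n = (\<Union>i\<in>{0..<Suc n}. disjointed E i)"
    by (simp add: partial_Un_def atLeast0LessThan lessThan_Suc_atMost)
  also have "\<dots> = (\<Union>i\<in>{0..<Suc n}. E i)"
    by (rule finite_UN_disjointed_eq)
  also have "\<dots> = E n"
    using mono_imp_UN_eq_last[OF \<open>mono E\<close>] by (simp add: atLeast0LessThan lessThan_Suc_atMost)
  finally show "partial_Un (disjointed E) n = E n" .
qed

lemma partial_Un_in_Mon: "is_ideal I \<Longrightarrow> (\<And>n. E n \<in> I) \<Longrightarrow> partial_Un E \<in> Mon I"
  by (simp add: Mon_iff mono_partial_Un partial_Un_def is_ideal_finite_UN)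

lemma disjointed_in_Phat:
  assumes "is_ideal I" "\<And>n. E n \<in> I"
  shows "disjointed E \<in> Phat I"
proof -
  have "disjointed E n \<in> I" for n
    using is_ideal_subset[OF assms(1) assms(2) disjointed_subset] .
  moreover have "disjointed E m \<inter> disjointed E n = {}" if "m \<noteq> n" for m n
    using disjoint_family_disjointed[of E] that unfolding disjoint_family_on_def by blast
  ultimately show ?thesis by (simp add: Phat_def)
qed

lemma disjointed_in_Part:
  "is_ideal I \<Longrightarrow> (\<And>n. E n \<in> I) \<Longrightarrow> (\<Union>n. E n) = UNIV \<Longrightarrow> disjointed E \<in> Part I"
  unfolding Part_def by (simp add: disjointed_in_Phat UN_disjointed_eq)

text \<open>Past \<open>N\<close>, the differences \<open>B (Suc n) - B n\<close> miss \<open>F n \<subseteq> B n\<close>.\<close>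

lemma tail_meet_disjointed_subset:
  assumes "mono F" "mono B" "\<forall>n\<ge>N. F n \<subseteq> B n"
  shows "tail_meet (disjointed B) F \<subseteq> F N \<inter> B N"
proof
  fix x
  assume "x \<in> tail_meet (disjointed B) F"
  then obtain n where x_diff: "x \<in> B (Suc n) - B n" and x_F: "x \<in> F n"
    unfolding tail_meet_def using disjointed_mono[OF \<open>mono B\<close>] by auto
  show "x \<in> F N \<inter> B N"
  proof (cases "N \<le> n")
    case True
    then show ?thesis using assms(3) x_diff x_F by blast
  next
    case False
    then have "B (Suc n) \<subseteq> B N" "F n \<subseteq> F N"
      using monoD[OF \<open>mono B\<close>, of "Suc n" N] monoD[OF \<open>mono F\<close>, of n N] by auto
    then show ?thesis using x_diff x_F by blast
  qed
qed

lemma mono_subset_partial_Un_Un_tail_meet: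
  assumes "mono E" "(\<Union>k. A k) = UNIV"
  shows "E n \<subseteq> partial_Un A n \<union> tail_meet A E"
proof
  fix x
  assume x: "x \<in> E n"
  obtain k where k: "x \<in> A k" using assms(2) by blast
  show "x \<in> partial_Un A n \<union> tail_meet A E"
  proof (cases "k \<le> n")
    case True
    then show ?thesis using k by (auto simp: partial_Un_def)
  next
    case False
    then obtain j where "k = Suc j" "n \<le> j" by (cases k) auto
    moreover have "x \<in> E j" using x \<open>n \<le> j\<close> \<open>mono E\<close> by (auto dest: monoD)
    ultimately show ?thesis using k by (auto simp: tail_meet_def)
  qed
qed

lemma partial_Un_image_in_bsigma_fams:
  assumes I: "is_ideal I" and J: "is_ideal J" and \<E>: "\<E> \<in> bs_fams (I \<inter> J) J I"
  shows "partial_Un ` \<E> \<in> bsigma_fams I J"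
  unfolding bsigma_fams_def
proof (intro CollectI conjI ballI)
  have \<E>_Phat: "E \<in> Phat I" if "E \<in> \<E>" for E
    using \<E> that by (auto simp: bs_fams_iff)
  then show "partial_Un ` \<E> \<subseteq> Mon I"
    using partial_Un_in_Mon[OF I] by (auto simp: Phat_def)
  fix B
  assume "B \<in> Mon J"
  define B' where "B' n = B n \<union> {..n}" for n
  have B'_J: "B' n \<in> J" for n
    using \<open>B \<in> Mon J\<close> is_ideal_Un[OF J] is_ideal_finite[OF J] by (simp add: B'_def Mon_iff)
  have "mono B'"
    using \<open>B \<in> Mon J\<close> by (auto simp: B'_def Mon_iff mono_def)
  have "disjointed B' \<in> Part J"
    using B'_J by (intro disjointed_in_Part[OF J]) (auto simp: B'_def)
  then obtain E where "E \<in> \<E>" and big: "tail_meet (disjointed B') (partial_Un E) \<notin> I \<inter> J"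
    using \<E> by (auto simp: bs_fams_iff)
  have "infinite {n. \<not> partial_Un E n \<subseteq> B n}"
  proof
    assume "finite {n. \<not> partial_Un E n \<subseteq> B n}"
    then obtain M where "\<forall>n. \<not> partial_Un E n \<subseteq> B n \<longrightarrow> n \<le> M"
      by (auto simp: finite_nat_set_iff_bounded_le)
    then have "\<forall>n\<ge>Suc M. partial_Un E n \<subseteq> B' n"
      by (force simp: B'_def)
    then have "tail_meet (disjointed B') (partial_Un E) \<subseteq> partial_Un E (Suc M) \<inter> B' (Suc M)"
      using tail_meet_disjointed_subset mono_partial_Un \<open>mono B'\<close> by blast
    moreover have "partial_Un E (Suc M) \<in> I"
      using partial_Un_in_Mon[OF I] \<E>_Phat[OF \<open>E \<in> \<E>\<close>] by (simp add: Phat_def Mon_iff)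
    ultimately have "tail_meet (disjointed B') (partial_Un E) \<in> I \<inter> J"
      using is_ideal_subset[OF I] is_ideal_subset[OF J B'_J] by blast
    with big show False ..
  qed
  then show "\<exists>G\<in>partial_Un ` \<E>. infinite {n. \<not> G n \<subseteq> B n}"
    using \<open>E \<in> \<E>\<close> by blast
qed

lemma const_image_in_bsigma_fams:
  assumes "\<A> \<in> addw_fams I J"
  shows "(\<lambda>A n. A) ` \<A> \<in> bsigma_fams I J"
proof -
  have "(\<lambda>A n. A) ` \<A> \<subseteq> Mon I"
    using assms by (auto simp: addw_fams_def Mon_def)
  moreover have "\<exists>E\<in>(\<lambda>A n. A) ` \<A>. infinite {n. \<not> E n \<subseteq> B n}" if B: "B \<in> Mon J" for B
  proof -
    obtain A where "A \<in> \<A>" "\<forall>n. \<not> A \<subseteq> B n"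
      using assms B unfolding addw_fams_def Mon_def by blast
    then have "infinite {n. \<not> A \<subseteq> B n}" by simp
    with \<open>A \<in> \<A>\<close> show ?thesis by (intro bexI[of _ "\<lambda>n. A"]) auto
  qed
  ultimately show ?thesis by (simp add: bsigma_fams_def)
qed

lemma tail_meet_image_in_addw_fams:
  assumes J: "is_ideal J" and X: "X \<in> bsigma_fams I J" and A: "A \<in> Part J"
    and small: "\<And>E. E \<in> X \<Longrightarrow> tail_meet A E \<in> I"
  shows "tail_meet A ` X \<in> addw_fams I J"
  unfolding addw_fams_def
proof (intro CollectI conjI allI impI)
  show "tail_meet A ` X \<subseteq> I" using small by blast
  fix C :: "nat \<Rightarrow> nat set"
  assume C: "\<forall>n. C n \<in> J"
  show "\<exists>T\<in>tail_meet A ` X. \<forall>n. \<not> T \<subseteq> C n"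
  proof (rule ccontr)
    assume "\<not> ?thesis"
    then have swallowed: "\<exists>m. tail_meet A E \<subseteq> C m" if "E \<in> X" for E
      using that by blast
    define B where "B n = partial_Un A n \<union> partial_Un C n" for n
    have "A n \<in> J" for n using A by (simp add: Part_def Phat_def)
    then have "partial_Un A \<in> Mon J" "partial_Un C \<in> Mon J"
      using partial_Un_in_Mon[OF J] C by auto
    then have "B \<in> Mon J"
      using is_ideal_Un[OF J] unfolding B_def Mon_iff mono_def by blast
    then obtain E where "E \<in> X" and escapes: "infinite {n. \<not> E n \<subseteq> B n}"
      using X by (auto simp: bsigma_fams_def)
    obtain m where m: "tail_meet A E \<subseteq> C m" using swallowed[OF \<open>E \<in> X\<close>] by blast
    have "mono E" using X \<open>E \<in> X\<close> by (auto simp: bsigma_fams_def Mon_iff)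
    have "E n \<subseteq> B n" if "m \<le> n" for n
    proof -
      have "C m \<subseteq> partial_Un C n" using that by (auto simp: partial_Un_def)
      then show ?thesis
        using mono_subset_partial_Un_Un_tail_meet[OF \<open>mono E\<close>, of A n] A m
        by (auto simp: B_def Part_def)
    qed
    then have "{n. \<not> E n \<subseteq> B n} \<subseteq> {..<m}" by (auto simp: not_less[symmetric])
    then show False using escapes finite_subset by blast
  qed
qed

lemma bsigma_fams_disjointed_or_tail_meet:
  assumes I: "is_ideal I" and J: "is_ideal J" and X: "X \<in> bsigma_fams I J"
  shows "disjointed ` X \<in> bs_fams (I \<inter> J) J I \<or> (\<exists>A. tail_meet A ` X \<in> addw_fams I J)"
proof (cases "disjointed ` X \<in> bs_fams (I \<inter> J) J I")
  case True
  then show ?thesis ..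
next
  case False
  moreover have mono_I: "mono E" "\<And>k. E k \<in> I" if "E \<in> X" for E
    using X that by (auto simp: bsigma_fams_def Mon_iff)
  ultimately obtain A where A: "A \<in> Part J"
    and small: "\<And>E. E \<in> X \<Longrightarrow> tail_meet A (partial_Un (disjointed E)) \<in> I \<inter> J"
    using disjointed_in_Phat[OF I] by (auto simp: bs_fams_iff)
  have "tail_meet A E \<in> I" if "E \<in> X" for E
    using small[OF that] partial_Un_disjointed[OF mono_I(1)[OF that]] by simp
  then show ?thesis
    using tail_meet_image_in_addw_fams[OF J X A] by blast
qed

lemma bsigma_eq_min_bs_addw:
  assumes "is_ideal I" "is_ideal J"
  shows "mincard_eq_min (bsigma_fams I J) (bs_fams (I \<inter> J) J I) (addw_fams I J)"
  using partial_Un_image_in_bsigma_fams[OF assms] const_image_in_bsigma_fams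
    bsigma_fams_disjointed_or_tail_meet[OF assms]
  by (intro mincard_eq_min_by_images) blast+

theorem theorem5p2:
  assumes "is_ideal I" and "is_ideal J"
  shows "mincard_eq_min (bsigma_fams I J) (bs_fams (I \<inter> J) J I) (addw_fams I J) \<and>
         mincard_eq_min (bsigma_fams I I) (bs_fams I I I) (addw_fams I I)"
  using bsigma_eq_min_bs_addw[OF assms] bsigma_eq_min_bs_addw[OF assms(1) assms(1)] by simp

end
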